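(* Let $(\mathscr{C},\mathbb{E},\mathfrak{s})$ be an extriangulated category such that for every object $A$ the morphism $A\to 0$ is an $\mathbb{E}$-inflation and $0\to A$ is an $\mathbb{E}$-deflation, and let $\Sigma$ be as in the context. Then the functor $\mathbf{E}^1\colon\mathscr{C}^{\mathrm{op}}\times\mathscr{C}\to Ab$, $\mathbf{E}^1(-,-)=\mathscr{C}(-,\Sigma -)$, is biadditive.
   Context: An extriangulated category $(\mathscr{C},\mathbb{E},\mathfrak{s})$ is in the sense of Nakaoka–Palu: $\mathscr{C}$ additive, $\mathbb{E}\colon\mathscr{C}^{\mathrm{op}}\times\mathscr{C}\to Ab$ biadditive, $\mathfrak{s}$ an additive realisation assigning to $\delta\in\mathbb{E}(C,A)$ an equivalence class of sequences $[A\to B\to C]$, satisfying (ET1)–(ET4)$^{\mathrm{op}}$. For $a\colon A\to A'$ and $c\colon C'\to C$ write $a_*\delta=\mathbb{E}(C,a)(\delta)$ and $c^*\delta=\mathbb{E}(c,A)(\delta)$. A morphism $x\colon A\to B$ is an $\mathbb{E}$-inflation if $\mathfrak{s}(\delta)=[A\xrightarrow{x}B\to C]$ for some $\delta\in\mathbb{E}(C,A)$; dually for $\mathbb{E}$-deflations. For each object $Y$, $\Sigma Y$ is a chosen object with $\delta_Y\in\mathbb{E}(\Sigma Y,Y)$ such that $\mathfrak{s}(\delta_Y)=[Y\to 0\to\Sigma Y]$; for $f\colon X\to Y$, $\Sigma f$ is the unique morphism $\Sigma X\to\Sigma Y$ with $f_*\delta_X=(\Sigma f)^*\delta_Y$;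 $\Sigma$ is a functor. *)

theory Defs
  imports "HOL-Algebra.Group"
begin

section \<open>Additive categories (hom-sets are abelian groups, written multiplicatively in HOL-Algebra)\<close>

record ('o, 'm) precat =
  Ob   :: "'o set"
  HomG :: "'o \<Rightarrow> 'o \<Rightarrow> 'm monoid"
  cmp  :: "'m \<Rightarrow> 'm \<Rightarrow> 'm"           (* cmp C g f = g \<circ> f *)
  idm  :: "'o \<Rightarrow> 'm"

definition Hom :: "('o, 'm, 'z) precat_scheme \<Rightarrow> 'o \<Rightarrow> 'o \<Rightarrow> 'm set" where
  "Hom C X Y = carrier (HomG C X Y)"

definition zm :: "('o, 'm, 'z) precat_scheme \<Rightarrow> 'o \<Rightarrow> 'o \<Rightarrow> 'm" where
  "zm C X Y = \<one>\<^bsub>HomG C X Y\<^esub>"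

definition madd :: "('o, 'm, 'z) precat_scheme \<Rightarrow> 'o \<Rightarrow> 'o \<Rightarrow> 'm \<Rightarrow> 'm \<Rightarrow> 'm" where
  "madd C X Y f g = f \<otimes>\<^bsub>HomG C X Y\<^esub> g"

definition is_iso :: "('o, 'm, 'z) precat_scheme \<Rightarrow> 'o \<Rightarrow> 'o \<Rightarrow> 'm \<Rightarrow> bool" where
  "is_iso C X Y f \<longleftrightarrow> f \<in> Hom C X Y \<and>
     (\<exists>g \<in> Hom C Y X. cmp C g f = idm C X \<and> cmp C f g = idm C Y)"

definition is_zero_obj :: "('o, 'm, 'z) precat_scheme \<Rightarrow> 'o \<Rightarrow> bool" where
  "is_zero_obj C Z \<longleftrightarrow> Z \<in> Ob C \<and>
     (\<forall>X \<in> Ob C. card (Hom C X Z) = 1 \<and> card (Hom C Z X) = 1)"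

definition is_biproduct :: "('o, 'm, 'z) precat_scheme \<Rightarrow> 'o \<Rightarrow> 'o \<Rightarrow> 'o \<Rightarrow>
    'm \<Rightarrow> 'm \<Rightarrow> 'm \<Rightarrow> 'm \<Rightarrow> bool" where
  "is_biproduct C A B P i1 i2 p1 p2 \<longleftrightarrow>
     P \<in> Ob C \<and> i1 \<in> Hom C A P \<and> i2 \<in> Hom C B P \<and> p1 \<in> Hom C P A \<and> p2 \<in> Hom C P B \<and>
     cmp C p1 i1 = idm C A \<and> cmp C p2 i2 = idm C B \<and>
     cmp C p2 i1 = zm C A B \<and> cmp C p1 i2 = zm C B A \<and>
     madd C P P (cmp C i1 p1) (cmp C i2 p2) = idm C P"

definition additive_cat :: "('o, 'm, 'z) precat_scheme \<Rightarrow> bool" where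
  "additive_cat C \<longleftrightarrow>
    (\<forall>X \<in> Ob C. \<forall>Y \<in> Ob C. comm_group (HomG C X Y)) \<and>
    (\<forall>X \<in> Ob C. \<forall>Y \<in> Ob C. \<forall>Z \<in> Ob C. \<forall>f \<in> Hom C X Y. \<forall>g \<in> Hom C Y Z.
        cmp C g f \<in> Hom C X Z) \<and>
    (\<forall>W \<in> Ob C. \<forall>X \<in> Ob C. \<forall>Y \<in> Ob C. \<forall>Z \<in> Ob C.
       \<forall>f \<in> Hom C W X. \<forall>g \<in> Hom C X Y. \<forall>h \<in> Hom C Y Z.
        cmp C h (cmp C g f) = cmp C (cmp C h g) f) \<and>
    (\<forall>X \<in> Ob C. idm C X \<in> Hom C X X) \<and>
    (\<forall>X \<in> Ob C. \<forall>Y \<in> Ob C. \<forall>f \<in> Hom C X Y.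
        cmp C f (idm C X) = f \<and> cmp C (idm C Y) f = f) \<and>
    (\<forall>X \<in> Ob C. \<forall>Y \<in> Ob C. \<forall>Z \<in> Ob C. \<forall>f1 \<in> Hom C X Y. \<forall>f2 \<in> Hom C X Y. \<forall>g \<in> Hom C Y Z.
        cmp C g (madd C X Y f1 f2) = madd C X Z (cmp C g f1) (cmp C g f2)) \<and>
    (\<forall>X \<in> Ob C. \<forall>Y \<in> Ob C. \<forall>Z \<in> Ob C. \<forall>f \<in> Hom C X Y. \<forall>g1 \<in> Hom C Y Z. \<forall>g2 \<in> Hom C Y Z.
        cmp C (madd C Y Z g1 g2) f = madd C X Z (cmp C g1 f) (cmp C g2 f)) \<and>
    (\<exists>Z. is_zero_obj C Z) \<and>
    (\<forall>A \<in> Ob C. \<forall>B \<in> Ob C. \<exists>P i1 i2 p1 p2. is_biproduct C A B P i1 i2 p1 p2)"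

text \<open>G X Y is the abelian group F(X,Y); pl X' X c : F(X,Y) -> F(X',Y) for c : X' -> X
  (contravariant action), pr Y Y' a : F(X,Y) -> F(X,Y') for a : Y -> Y' (covariant action).\<close>

definition biadditive :: "('o, 'm, 'z) precat_scheme \<Rightarrow> ('o \<Rightarrow> 'o \<Rightarrow> 'g monoid) \<Rightarrow>
    ('o \<Rightarrow> 'o \<Rightarrow> 'm \<Rightarrow> 'g \<Rightarrow> 'g) \<Rightarrow> ('o \<Rightarrow> 'o \<Rightarrow> 'm \<Rightarrow> 'g \<Rightarrow> 'g) \<Rightarrow> bool" where
  "biadditive C G pl pr \<longleftrightarrow>
    (\<forall>X \<in> Ob C. \<forall>Y \<in> Ob C. comm_group (G X Y)) \<and>
    (\<forall>X \<in> Ob C. \<forall>Y \<in> Ob C. \<forall>Y' \<in> Ob C. \<forall>a \<in> Hom C Y Y'.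
        pr Y Y' a \<in> hom (G X Y) (G X Y')) \<and>
    (\<forall>X \<in> Ob C. \<forall>X' \<in> Ob C. \<forall>Y \<in> Ob C. \<forall>c \<in> Hom C X' X.
        pl X' X c \<in> hom (G X Y) (G X' Y)) \<and>
    (\<forall>X \<in> Ob C. \<forall>Y \<in> Ob C. \<forall>u \<in> carrier (G X Y).
        pr Y Y (idm C Y) u = u \<and> pl X X (idm C X) u = u) \<and>
    (\<forall>X \<in> Ob C. \<forall>Y \<in> Ob C. \<forall>Y' \<in> Ob C. \<forall>Y'' \<in> Ob C.
       \<forall>a \<in> Hom C Y Y'. \<forall>a' \<in> Hom C Y' Y''. \<forall>u \<in> carrier (G X Y).
        pr Y Y'' (cmp C a' a) u = pr Y' Y'' a' (pr Y Y' a u)) \<and>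
    (\<forall>X \<in> Ob C. \<forall>X' \<in> Ob C. \<forall>X'' \<in> Ob C. \<forall>Y \<in> Ob C.
       \<forall>c \<in> Hom C X' X. \<forall>c' \<in> Hom C X'' X'. \<forall>u \<in> carrier (G X Y).
        pl X'' X (cmp C c c') u = pl X'' X' c' (pl X' X c u)) \<and>
    (\<forall>X \<in> Ob C. \<forall>X' \<in> Ob C. \<forall>Y \<in> Ob C. \<forall>Y' \<in> Ob C.
       \<forall>c \<in> Hom C X' X. \<forall>a \<in> Hom C Y Y'. \<forall>u \<in> carrier (G X Y).
        pl X' X c (pr Y Y' a u) = pr Y Y' a (pl X' X c u)) \<and>
    (\<forall>X \<in> Ob C. \<forall>Y \<in> Ob C. \<forall>Y' \<in> Ob C. \<forall>a1 \<in> Hom C Y Y'. \<forall>a2 \<in> Hom C Y Y'.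
       \<forall>u \<in> carrier (G X Y).
        pr Y Y' (madd C Y Y' a1 a2) u = pr Y Y' a1 u \<otimes>\<^bsub>G X Y'\<^esub> pr Y Y' a2 u) \<and>
    (\<forall>X \<in> Ob C. \<forall>X' \<in> Ob C. \<forall>Y \<in> Ob C. \<forall>c1 \<in> Hom C X' X. \<forall>c2 \<in> Hom C X' X.
       \<forall>u \<in> carrier (G X Y).
        pl X' X (madd C X' X c1 c2) u = pl X' X c1 u \<otimes>\<^bsub>G X' Y\<^esub> pl X' X c2 u)"

record ('o, 'm, 'e) extri = "('o, 'm) precat" +
  EG    :: "'o \<Rightarrow> 'o \<Rightarrow> 'e monoid"
  pushE :: "'m \<Rightarrow> 'e \<Rightarrow> 'e"
  pullE :: "'m \<Rightarrow> 'e \<Rightarrow> 'e"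
  realE :: "'o \<Rightarrow> 'o \<Rightarrow> 'e \<Rightarrow> 'o \<Rightarrow> 'm \<Rightarrow> 'm \<Rightarrow> bool"
     (* realE C' A \<delta> B x y : the sequence A -x-> B -y-> C' belongs to the class s(\<delta>), \<delta> \<in> E(C',A) *)

definition Ext :: "('o, 'm, 'e, 'z) extri_scheme \<Rightarrow> 'o \<Rightarrow> 'o \<Rightarrow> 'e set" where
  "Ext T C A = carrier (EG T C A)"

definition realization_ax :: "('o, 'm, 'e, 'z) extri_scheme \<Rightarrow> bool" where
  "realization_ax T \<longleftrightarrow>
    (\<forall>Cc A \<delta> B x y. realE T Cc A \<delta> B x y \<longrightarrow>
        Cc \<in> Ob T \<and> A \<in> Ob T \<and> \<delta> \<in> Ext T Cc A \<and> B \<in> Ob T \<and> x \<in> Hom T A B \<and> y \<in> Hom T B Cc) \<and>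
    (\<forall>A \<in> Ob T. \<forall>Cc \<in> Ob T. \<forall>\<delta> \<in> Ext T Cc A. \<exists>B x y. realE T Cc A \<delta> B x y) \<and>
    (\<forall>A Cc \<delta> B x y B' x' y'. realE T Cc A \<delta> B x y \<longrightarrow>
        (realE T Cc A \<delta> B' x' y' \<longleftrightarrow>
          B' \<in> Ob T \<and> x' \<in> Hom T A B' \<and> y' \<in> Hom T B' Cc \<and>
          (\<exists>b. is_iso T B B' b \<and> cmp T b x = x' \<and> cmp T y' b = y))) \<and>
    (\<forall>A Cc \<delta> B x y A' Cc' \<delta>' B' x' y' a c.
        realE T Cc A \<delta> B x y \<longrightarrow> realE T Cc' A' \<delta>' B' x' y' \<longrightarrow>
        a \<in> Hom T A A' \<longrightarrow> c \<in> Hom T Cc Cc' \<longrightarrow> pushE T a \<delta> = pullE T c \<delta>' \<longrightarrow>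
        (\<exists>b \<in> Hom T B B'. cmp T b x = cmp T x' a \<and> cmp T y' b = cmp T c y))"

definition additive_realization_ax :: "('o, 'm, 'e, 'z) extri_scheme \<Rightarrow> bool" where
  "additive_realization_ax T \<longleftrightarrow>
    (\<forall>A \<in> Ob T. \<forall>Cc \<in> Ob T. \<forall>P i1 i2 p1 p2. is_biproduct T A Cc P i1 i2 p1 p2 \<longrightarrow>
        realE T Cc A (\<one>\<^bsub>EG T Cc A\<^esub>) P i1 p2) \<and>
    (\<forall>A Cc \<delta> B x y A' Cc' \<delta>' B' x' y'
       PA iA1 iA2 pA1 pA2 PB iB1 iB2 pB1 pB2 PC iC1 iC2 pC1 pC2.
        realE T Cc A \<delta> B x y \<longrightarrow> realE T Cc' A' \<delta>' B' x' y' \<longrightarrow>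
        is_biproduct T A A' PA iA1 iA2 pA1 pA2 \<longrightarrow>
        is_biproduct T B B' PB iB1 iB2 pB1 pB2 \<longrightarrow>
        is_biproduct T Cc Cc' PC iC1 iC2 pC1 pC2 \<longrightarrow>
        realE T PC PA
          (pushE T iA1 (pullE T pC1 \<delta>) \<otimes>\<^bsub>EG T PC PA\<^esub> pushE T iA2 (pullE T pC2 \<delta>'))
          PB
          (madd T PA PB (cmp T iB1 (cmp T x pA1)) (cmp T iB2 (cmp T x' pA2)))
          (madd T PB PC (cmp T iC1 (cmp T y pB1)) (cmp T iC2 (cmp T y' pB2))))"

definition ET3 :: "('o, 'm, 'e, 'z) extri_scheme \<Rightarrow> bool" where
  "ET3 T \<longleftrightarrow>
    (\<forall>A Cc \<delta> B x y A' Cc' \<delta>' B' x' y' a b.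
        realE T Cc A \<delta> B x y \<longrightarrow> realE T Cc' A' \<delta>' B' x' y' \<longrightarrow>
        a \<in> Hom T A A' \<longrightarrow> b \<in> Hom T B B' \<longrightarrow> cmp T b x = cmp T x' a \<longrightarrow>
        (\<exists>c \<in> Hom T Cc Cc'. cmp T c y = cmp T y' b \<and> pushE T a \<delta> = pullE T c \<delta>'))"

definition ET3op :: "('o, 'm, 'e, 'z) extri_scheme \<Rightarrow> bool" where
  "ET3op T \<longleftrightarrow>
    (\<forall>A Cc \<delta> B x y A' Cc' \<delta>' B' x' y' b c.
        realE T Cc A \<delta> B x y \<longrightarrow> realE T Cc' A' \<delta>' B' x' y' \<longrightarrow>
        b \<in> Hom T B B' \<longrightarrow> c \<in> Hom T Cc Cc' \<longrightarrow> cmp T y' b = cmp T c y \<longrightarrow>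
        (\<exists>a \<in> Hom T A A'. cmp T x' a = cmp T b x \<and> pushE T a \<delta> = pullE T c \<delta>'))"

definition ET4 :: "('o, 'm, 'e, 'z) extri_scheme \<Rightarrow> bool" where
  "ET4 T \<longleftrightarrow>
    (\<forall>A B Cc D F f f' g g' \<delta> \<delta>'.
        realE T D A \<delta> B f f' \<longrightarrow> realE T F B \<delta>' Cc g g' \<longrightarrow>
        (\<exists>E d e \<delta>'' h'. E \<in> Ob T \<and> d \<in> Hom T D E \<and> e \<in> Hom T E F \<and>
           \<delta>'' \<in> Ext T E A \<and> h' \<in> Hom T Cc E \<and>
           realE T E A \<delta>'' Cc (cmp T g f) h' \<and>
           realE T F D (pushE T f' \<delta>') E d e \<and>
           pullE T d \<delta>'' = \<delta> \<and> pushE T f \<delta>'' = pullE T e \<delta>' \<and>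
           cmp T h' g = cmp T d f' \<and> cmp T e h' = g'))"

definition ET4op :: "('o, 'm, 'e, 'z) extri_scheme \<Rightarrow> bool" where
  "ET4op T \<longleftrightarrow>
    (\<forall>A B Cc D F f f' g g' \<delta> \<delta>'.
        realE T A D \<delta> B f' f \<longrightarrow> realE T B F \<delta>' Cc g' g \<longrightarrow>
        (\<exists>E d e \<delta>'' h'. E \<in> Ob T \<and> d \<in> Hom T E D \<and> e \<in> Hom T F E \<and>
           \<delta>'' \<in> Ext T A E \<and> h' \<in> Hom T E Cc \<and>
           realE T A E \<delta>'' Cc h' (cmp T f g) \<and>
           realE T D F (pullE T f' \<delta>') E e d \<and>
           pushE T d \<delta>'' = \<delta> \<and> pullE T f \<delta>'' = pushE T e \<delta>' \<and>
           cmp T g h' = cmp T f' d \<and> cmp T h' e = g'))"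

definition extriangulated :: "('o, 'm, 'e, 'z) extri_scheme \<Rightarrow> bool" where
  "extriangulated T \<longleftrightarrow>
     additive_cat T \<and>
     biadditive T (EG T) (\<lambda>_ _ c. pullE T c) (\<lambda>_ _ a. pushE T a) \<and>
     realization_ax T \<and> additive_realization_ax T \<and>
     ET3 T \<and> ET3op T \<and> ET4 T \<and> ET4op T"

definition is_inflation :: "('o, 'm, 'e, 'z) extri_scheme \<Rightarrow> 'o \<Rightarrow> 'o \<Rightarrow> 'm \<Rightarrow> bool" where
  "is_inflation T A B x \<longleftrightarrow> (\<exists>Cc \<delta> y. realE T Cc A \<delta> B x y)"

definition is_deflation :: "('o, 'm, 'e, 'z) extri_scheme \<Rightarrow> 'o \<Rightarrow> 'o \<Rightarrow> 'm \<Rightarrow> bool" where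
  "is_deflation T B Cc y \<longleftrightarrow> (\<exists>A \<delta> x. realE T Cc A \<delta> B x y)"

definition SigMor :: "('o, 'm, 'e, 'z) extri_scheme \<Rightarrow> ('o \<Rightarrow> 'o) \<Rightarrow> ('o \<Rightarrow> 'e) \<Rightarrow>
    'o \<Rightarrow> 'o \<Rightarrow> 'm \<Rightarrow> 'm" where
  "SigMor T Sig dl X Y f =
     (THE s. s \<in> Hom T (Sig X) (Sig Y) \<and> pushE T f (dl X) = pullE T s (dl Y))"

end

theory Submission
  imports Defs "HOL-Algebra.Coset"
begin

text \<open>Write \<open>\<delta>\<^sub>Y\<close> for the extension realised by \<open>Y \<rightarrow> 0 \<rightarrow> \<Sigma>Y\<close>. For \<open>f : X \<rightarrow> Y\<close>,
  (ET3) applied to the pair \<open>(f, id\<^sub>0)\<close> yields some \<open>c\<close> with \<open>f\<^sub>* \<delta>\<^sub>X = c\<^sup>* \<delta>\<^sub>Y\<close>.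
  Such a \<open>c\<close> is unique: if \<open>c\<^sup>* \<delta>\<^sub>Y = 0\<close> for \<open>c : W \<rightarrow> \<Sigma>Y\<close>, then the realisation
  axiom, applied to the split conflation \<open>Y \<rightarrow> Y \<oplus> W \<rightarrow> W\<close> realising \<open>0\<close> and to
  \<open>Y \<rightarrow> 0 \<rightarrow> \<Sigma>Y\<close>, shows that \<open>c\<close> composed with the projection \<open>Y \<oplus> W \<rightarrow> W\<close> factors
  through \<open>0\<close>, so \<open>c = 0\<close>; since \<open>c \<mapsto> c\<^sup>* \<delta>\<^sub>Y\<close> is additive, it is injective. By
  uniqueness \<open>\<Sigma>\<close> preserves identities, composition and sums, and \<open>\<C>(-, \<Sigma>-)\<close> is
  biadditive because composition is bilinear.\<close>

locale additive_category =
  fixes C :: "('o, 'm, 'z) precat_scheme"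
  assumes additive_cat: "additive_cat C"
begin

lemma Hom_comm_group: "X \<in> Ob C \<Longrightarrow> Y \<in> Ob C \<Longrightarrow> comm_group (HomG C X Y)"
  using additive_cat by (simp add: additive_cat_def)

lemma comp_closed:
  "\<lbrakk>X \<in> Ob C; Y \<in> Ob C; W \<in> Ob C; f \<in> Hom C X Y; g \<in> Hom C Y W\<rbrakk> \<Longrightarrow> cmp C g f \<in> Hom C X W"
  using additive_cat unfolding additive_cat_def by (elim conjE) simp

lemma comp_assoc:
  "\<lbrakk>V \<in> Ob C; X \<in> Ob C; Y \<in> Ob C; W \<in> Ob C; f \<in> Hom C V X; g \<in> Hom C X Y; h \<in> Hom C Y W\<rbrakk>
    \<Longrightarrow> cmp C h (cmp C g f) = cmp C (cmp C h g) f"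
  using additive_cat unfolding additive_cat_def by (elim conjE) simp

lemma id_closed: "X \<in> Ob C \<Longrightarrow> idm C X \<in> Hom C X X"
  using additive_cat unfolding additive_cat_def by (elim conjE) simp

lemma comp_id_left: "\<lbrakk>X \<in> Ob C; Y \<in> Ob C; f \<in> Hom C X Y\<rbrakk> \<Longrightarrow> cmp C (idm C Y) f = f"
  using additive_cat unfolding additive_cat_def by (elim conjE) simp

lemma comp_id_right: "\<lbrakk>X \<in> Ob C; Y \<in> Ob C; f \<in> Hom C X Y\<rbrakk> \<Longrightarrow> cmp C f (idm C X) = f"
  using additive_cat unfolding additive_cat_def by (elim conjE) simp

lemma comp_distrib_left:
  "\<lbrakk>X \<in> Ob C; Y \<in> Ob C; W \<in> Ob C; f1 \<in> Hom C X Y; f2 \<in> Hom C X Y; g \<in> Hom C Y W\<rbrakk>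
    \<Longrightarrow> cmp C g (madd C X Y f1 f2) = madd C X W (cmp C g f1) (cmp C g f2)"
  using additive_cat unfolding additive_cat_def by (elim conjE) simp

lemma comp_distrib_right:
  "\<lbrakk>X \<in> Ob C; Y \<in> Ob C; W \<in> Ob C; f \<in> Hom C X Y; g1 \<in> Hom C Y W; g2 \<in> Hom C Y W\<rbrakk>
    \<Longrightarrow> cmp C (madd C Y W g1 g2) f = madd C X W (cmp C g1 f) (cmp C g2 f)"
  using additive_cat unfolding additive_cat_def by (elim conjE) simp

lemma ex_biproduct:
  assumes "A \<in> Ob C" "B \<in> Ob C"
  obtains P i1 i2 p1 p2 where "is_biproduct C A B P i1 i2 p1 p2"
proof -
  have "\<forall>A \<in> Ob C. \<forall>B \<in> Ob C. \<exists>P i1 i2 p1 p2. is_biproduct C A B P i1 i2 p1 p2"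
    using additive_cat by (simp add: additive_cat_def)
  then show thesis using assms that by blast
qed

lemma madd_closed:
  "\<lbrakk>X \<in> Ob C; Y \<in> Ob C; f \<in> Hom C X Y; g \<in> Hom C X Y\<rbrakk> \<Longrightarrow> madd C X Y f g \<in> Hom C X Y"
  using Hom_comm_group by (simp add: Hom_def madd_def comm_group_def monoid.m_closed comm_monoid_def)

lemma postcomp_hom:
  "\<lbrakk>X \<in> Ob C; Y \<in> Ob C; W \<in> Ob C; g \<in> Hom C Y W\<rbrakk>
    \<Longrightarrow> (\<lambda>h. cmp C g h) \<in> hom (HomG C X Y) (HomG C X W)"
  using comp_closed comp_distrib_left by (auto simp: hom_def Hom_def madd_def)

lemma precomp_hom:
  "\<lbrakk>X \<in> Ob C; Y \<in> Ob C; W \<in> Ob C; f \<in> Hom C X Y\<rbrakk>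
    \<Longrightarrow> (\<lambda>h. cmp C h f) \<in> hom (HomG C Y W) (HomG C X W)"
  using comp_closed comp_distrib_right by (auto simp: hom_def Hom_def madd_def)

lemma comp_zm_left:
  assumes "X \<in> Ob C" "Y \<in> Ob C" "W \<in> Ob C" "f \<in> Hom C X Y"
  shows "cmp C (zm C Y W) f = zm C X W"
  using hom_one[OF precomp_hom[OF assms]] Hom_comm_group assms
  by (simp add: zm_def comm_group.axioms(2))

lemma comp_zm_right:
  assumes "X \<in> Ob C" "Y \<in> Ob C" "W \<in> Ob C" "g \<in> Hom C Y W"
  shows "cmp C g (zm C X Y) = zm C X W"
  using hom_one[OF postcomp_hom[OF assms]] Hom_comm_group assms
  by (simp add: zm_def comm_group.axioms(2))

lemma zm_closed: "X \<in> Ob C \<Longrightarrow> Y \<in> Ob C \<Longrightarrow> zm C X Y \<in> Hom C X Y"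
  using Hom_comm_group by (simp add: Hom_def zm_def comm_group_def monoid.one_closed comm_monoid_def)

lemma Hom_to_zero_obj_eq:
  assumes "is_zero_obj C Z" "X \<in> Ob C" "f \<in> Hom C X Z" "g \<in> Hom C X Z"
  shows "f = g"
proof -
  have "card (Hom C X Z) = 1" using assms(1,2) by (simp add: is_zero_obj_def)
  then show ?thesis using assms(3,4) by (metis card_1_singletonE singletonD)
qed

lemma comp_through_zero_obj:
  assumes Z: "is_zero_obj C Z" and "X \<in> Ob C" "Y \<in> Ob C" "f \<in> Hom C X Z" "g \<in> Hom C Z Y"
  shows "cmp C g f = zm C X Y"
proof -
  have "Z \<in> Ob C" using Z by (simp add: is_zero_obj_def)
  then have "f = zm C X Z" using Hom_to_zero_obj_eq[OF Z] zm_closed assms by blast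
  then show ?thesis using comp_zm_right \<open>Z \<in> Ob C\<close> assms by blast
qed

end

locale extriangulated_category =
  fixes T :: "('o, 'm, 'e, 'z) extri_scheme"
  assumes extriangulated: "extriangulated T"
begin

sublocale additive_category T
  using extriangulated by unfold_locales (simp add: extriangulated_def)

lemma Ext_biadditive: "biadditive T (EG T) (\<lambda>_ _ c. pullE T c) (\<lambda>_ _ a. pushE T a)"
  using extriangulated by (simp add: extriangulated_def)

lemma Ext_comm_group: "X \<in> Ob T \<Longrightarrow> Y \<in> Ob T \<Longrightarrow> comm_group (EG T X Y)"
  using Ext_biadditive by (simp add: biadditive_def)

lemma pushE_id: "\<lbrakk>X \<in> Ob T; Y \<in> Ob T; u \<in> Ext T X Y\<rbrakk> \<Longrightarrow> pushE T (idm T Y) u = u"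
  using Ext_biadditive unfolding biadditive_def Ext_def by (elim conjE) simp

lemma pullE_id: "\<lbrakk>X \<in> Ob T; Y \<in> Ob T; u \<in> Ext T X Y\<rbrakk> \<Longrightarrow> pullE T (idm T X) u = u"
  using Ext_biadditive unfolding biadditive_def Ext_def by (elim conjE) simp

lemma pushE_comp:
  "\<lbrakk>X \<in> Ob T; Y \<in> Ob T; Y' \<in> Ob T; Y'' \<in> Ob T; a \<in> Hom T Y Y'; a' \<in> Hom T Y' Y''; u \<in> Ext T X Y\<rbrakk>
    \<Longrightarrow> pushE T (cmp T a' a) u = pushE T a' (pushE T a u)"
  using Ext_biadditive unfolding biadditive_def Ext_def by (elim conjE) simp

lemma pullE_comp:
  "\<lbrakk>X \<in> Ob T; X' \<in> Ob T; X'' \<in> Ob T; Y \<in> Ob T; c \<in> Hom T X' X; c' \<in> Hom T X'' X'; u \<in> Ext T X Y\<rbrakk>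
    \<Longrightarrow> pullE T (cmp T c c') u = pullE T c' (pullE T c u)"
  using Ext_biadditive unfolding biadditive_def Ext_def by (elim conjE) simp

lemma pullE_pushE:
  "\<lbrakk>X \<in> Ob T; X' \<in> Ob T; Y \<in> Ob T; Y' \<in> Ob T; c \<in> Hom T X' X; a \<in> Hom T Y Y'; u \<in> Ext T X Y\<rbrakk>
    \<Longrightarrow> pullE T c (pushE T a u) = pushE T a (pullE T c u)"
  using Ext_biadditive unfolding biadditive_def Ext_def by (elim conjE) simp

lemma pushE_madd:
  "\<lbrakk>X \<in> Ob T; Y \<in> Ob T; Y' \<in> Ob T; a1 \<in> Hom T Y Y'; a2 \<in> Hom T Y Y'; u \<in> Ext T X Y\<rbrakk>
    \<Longrightarrow> pushE T (madd T Y Y' a1 a2) u = pushE T a1 u \<otimes>\<^bsub>EG T X Y'\<^esub> pushE T a2 u"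
  using Ext_biadditive unfolding biadditive_def Ext_def by (elim conjE) simp

lemma pullE_madd:
  "\<lbrakk>X \<in> Ob T; X' \<in> Ob T; Y \<in> Ob T; c1 \<in> Hom T X' X; c2 \<in> Hom T X' X; u \<in> Ext T X Y\<rbrakk>
    \<Longrightarrow> pullE T (madd T X' X c1 c2) u = pullE T c1 u \<otimes>\<^bsub>EG T X' Y\<^esub> pullE T c2 u"
  using Ext_biadditive unfolding biadditive_def Ext_def by (elim conjE) simp

lemma pullE_closed:
  assumes "X \<in> Ob T" "X' \<in> Ob T" "Y \<in> Ob T" "c \<in> Hom T X' X" "u \<in> Ext T X Y"
  shows "pullE T c u \<in> Ext T X' Y"
proof -
  have "pullE T c \<in> hom (EG T X Y) (EG T X' Y)"
    using Ext_biadditive assms(1-4) unfolding biadditive_def by (elim conjE) simp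
  then show ?thesis using assms(5) by (auto simp: hom_def Ext_def)
qed

lemma pullE_at_hom:
  "\<lbrakk>X \<in> Ob T; X' \<in> Ob T; Y \<in> Ob T; u \<in> Ext T X Y\<rbrakk>
    \<Longrightarrow> (\<lambda>c. pullE T c u) \<in> hom (HomG T X' X) (EG T X' Y)"
  using pullE_closed pullE_madd by (auto simp: hom_def Hom_def Ext_def madd_def)

lemma realE_wf:
  "C \<in> Ob T \<and> A \<in> Ob T \<and> \<delta> \<in> Ext T C A \<and> B \<in> Ob T \<and> x \<in> Hom T A B \<and> y \<in> Hom T B C"
  if "realE T C A \<delta> B x y"
proof -
  have "realization_ax T" using extriangulated by (simp add: extriangulated_def)
  then show ?thesis using that unfolding realization_ax_def by (elim conjE) blast
qed

lemma realE_morphism: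
  assumes "realE T C A \<delta> B x y" "realE T C' A' \<delta>' B' x' y'"
    and "a \<in> Hom T A A'" "c \<in> Hom T C C'" "pushE T a \<delta> = pullE T c \<delta>'"
  obtains b where "b \<in> Hom T B B'" "cmp T b x = cmp T x' a" "cmp T y' b = cmp T c y"
  using extriangulated assms unfolding extriangulated_def realization_ax_def by metis

lemma realE_split:
  "\<lbrakk>A \<in> Ob T; C \<in> Ob T; is_biproduct T A C P i1 i2 p1 p2\<rbrakk> \<Longrightarrow> realE T C A (\<one>\<^bsub>EG T C A\<^esub>) P i1 p2"
  using extriangulated by (simp add: extriangulated_def additive_realization_ax_def)

lemma ET3_morphism:
  assumes "realE T C A \<delta> B x y" "realE T C' A' \<delta>' B' x' y'"
    and "a \<in> Hom T A A'" "b \<in> Hom T B B'" "cmp T b x = cmp T x' a"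
  obtains c where "c \<in> Hom T C C'" "cmp T c y = cmp T y' b" "pushE T a \<delta> = pullE T c \<delta>'"
  using extriangulated assms unfolding extriangulated_def ET3_def by metis

lemma pullE_eq_one_imp_zm:
  assumes \<delta>: "realE T C A \<delta> Z x y" and Z: "is_zero_obj T Z"
    and W: "W \<in> Ob T" and c: "c \<in> Hom T W C" and c_pullback: "pullE T c \<delta> = \<one>\<^bsub>EG T W A\<^esub>"
  shows "c = zm T W C"
proof -
  have C: "C \<in> Ob T" and A: "A \<in> Ob T" and y: "y \<in> Hom T Z C"
    using realE_wf[OF \<delta>] by auto
  obtain P i1 i2 p1 p2 where bp: "is_biproduct T A W P i1 i2 p1 p2"
    using ex_biproduct[OF A W] .
  have P: "P \<in> Ob T" and i2: "i2 \<in> Hom T W P" and p2: "p2 \<in> Hom T P W"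
    and p2_i2: "cmp T p2 i2 = idm T W"
    using bp by (auto simp: is_biproduct_def)
  have "pushE T (idm T A) (\<one>\<^bsub>EG T W A\<^esub>) = pullE T c \<delta>"
    using c_pullback pushE_id[OF W A] Ext_comm_group[OF W A]
    by (simp add: Ext_def comm_group.axioms(2) group.is_monoid monoid.one_closed)
  then obtain b where b: "b \<in> Hom T P Z" and "cmp T y b = cmp T c p2"
    using realE_morphism[OF realE_split[OF A W bp] \<delta> id_closed[OF A] c] by blast
  then have c_p2: "cmp T c p2 = zm T P C"
    using comp_through_zero_obj[OF Z P C b y] by simp
  have "c = cmp T c (cmp T p2 i2)" using comp_id_right[OF W C c] p2_i2 by simp
  also have "\<dots> = cmp T (zm T P C) i2" using comp_assoc[OF W P W C i2 p2 c] c_p2 by simp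
  also have "\<dots> = zm T W C" using comp_zm_left[OF W P C i2] .
  finally show ?thesis .
qed

lemma inj_on_pullE:
  assumes \<delta>: "realE T C A \<delta> Z x y" and Z: "is_zero_obj T Z" and W: "W \<in> Ob T"
  shows "inj_on (\<lambda>c. pullE T c \<delta>) (Hom T W C)"
proof -
  have "C \<in> Ob T" and "A \<in> Ob T" and "\<delta> \<in> Ext T C A" using realE_wf[OF \<delta>] by auto
  then interpret group_hom "HomG T W C" "EG T W A" "\<lambda>c. pullE T c \<delta>"
    using pullE_at_hom W Hom_comm_group Ext_comm_group
    by (simp add: group_hom_def group_hom_axioms_def comm_group.axioms(2))
  have "kernel (HomG T W C) (EG T W A) (\<lambda>c. pullE T c \<delta>) = {\<one>\<^bsub>HomG T W C\<^esub>}"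
    using pullE_eq_one_imp_zm[OF \<delta> Z W] by (auto simp: kernel_def Hom_def zm_def)
  then show ?thesis using trivial_ker_imp_inj by (simp add: Hom_def)
qed

lemma ex_pushE_eq_pullE:
  assumes \<delta>: "realE T C A \<delta> Z x y" and \<delta>': "realE T C' A' \<delta>' Z x' y'"
    and Z: "is_zero_obj T Z" and f: "f \<in> Hom T A A'"
  shows "\<exists>c \<in> Hom T C C'. pushE T f \<delta> = pullE T c \<delta>'"
proof -
  have A: "A \<in> Ob T" and "A' \<in> Ob T" and "Z \<in> Ob T" and "x \<in> Hom T A Z"
    and "x' \<in> Hom T A' Z"
    using realE_wf[OF \<delta>] realE_wf[OF \<delta>'] by auto
  then have "cmp T (idm T Z) x = cmp T x' f"
    using Hom_to_zero_obj_eq[OF Z A] comp_closed f id_closed by meson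
  then show ?thesis using ET3_morphism[OF \<delta> \<delta>' f id_closed[OF \<open>Z \<in> Ob T\<close>]] by metis
qed

end

locale additive_endofunctor = additive_category +
  fixes F :: "'o \<Rightarrow> 'o" and Fm :: "'o \<Rightarrow> 'o \<Rightarrow> 'm \<Rightarrow> 'm"
  assumes F_Ob: "X \<in> Ob C \<Longrightarrow> F X \<in> Ob C"
    and Fm_Hom: "\<lbrakk>X \<in> Ob C; Y \<in> Ob C; f \<in> Hom C X Y\<rbrakk> \<Longrightarrow> Fm X Y f \<in> Hom C (F X) (F Y)"
    and Fm_id: "X \<in> Ob C \<Longrightarrow> Fm X X (idm C X) = idm C (F X)"
    and Fm_comp: "\<lbrakk>X \<in> Ob C; Y \<in> Ob C; W \<in> Ob C; f \<in> Hom C X Y; g \<in> Hom C Y W\<rbrakk>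
      \<Longrightarrow> Fm X W (cmp C g f) = cmp C (Fm Y W g) (Fm X Y f)"
    and Fm_madd: "\<lbrakk>X \<in> Ob C; Y \<in> Ob C; f1 \<in> Hom C X Y; f2 \<in> Hom C X Y\<rbrakk>
      \<Longrightarrow> Fm X Y (madd C X Y f1 f2) = madd C (F X) (F Y) (Fm X Y f1) (Fm X Y f2)"
begin

lemma biadditive_Hom_F:
  "biadditive C (\<lambda>X Y. HomG C X (F Y)) (\<lambda>X' X c h. cmp C h c) (\<lambda>Y Y' a h. cmp C (Fm Y Y' a) h)"
  unfolding biadditive_def
proof (intro conjI ballI)
  fix X Y assume "X \<in> Ob C" "Y \<in> Ob C"
  then show "comm_group (HomG C X (F Y))" using Hom_comm_group F_Ob by blast
next
  fix X Y Y' a assume "X \<in> Ob C" "Y \<in> Ob C" "Y' \<in> Ob C" "a \<in> Hom C Y Y'"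
  then show "(\<lambda>h. cmp C (Fm Y Y' a) h) \<in> hom (HomG C X (F Y)) (HomG C X (F Y'))"
    using postcomp_hom F_Ob Fm_Hom by blast
next
  fix X X' Y c assume "X \<in> Ob C" "X' \<in> Ob C" "Y \<in> Ob C" "c \<in> Hom C X' X"
  then show "(\<lambda>h. cmp C h c) \<in> hom (HomG C X (F Y)) (HomG C X' (F Y))"
    using precomp_hom F_Ob by blast
next
  fix X Y u assume X: "X \<in> Ob C" and Y: "Y \<in> Ob C" and "u \<in> carrier (HomG C X (F Y))"
  then have u: "u \<in> Hom C X (F Y)" by (simp add: Hom_def)
  show "cmp C (Fm Y Y (idm C Y)) u = u"
    using Fm_id[OF Y] comp_id_left[OF X F_Ob[OF Y] u] by simp
  show "cmp C u (idm C X) = u"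
    using comp_id_right[OF X F_Ob[OF Y] u] .
next
  fix X Y Y' Y'' a a' u
  assume "X \<in> Ob C" "Y \<in> Ob C" "Y' \<in> Ob C" "Y'' \<in> Ob C" "a \<in> Hom C Y Y'" "a' \<in> Hom C Y' Y''"
    and "u \<in> carrier (HomG C X (F Y))"
  then show "cmp C (Fm Y Y'' (cmp C a' a)) u = cmp C (Fm Y' Y'' a') (cmp C (Fm Y Y' a) u)"
    using Fm_comp comp_assoc[of X "F Y" "F Y'" "F Y''"] F_Ob Fm_Hom by (simp add: Hom_def)
next
  fix X X' X'' Y c c' u
  assume "X \<in> Ob C" "X' \<in> Ob C" "X'' \<in> Ob C" "Y \<in> Ob C" "c \<in> Hom C X' X" "c' \<in> Hom C X'' X'"
    and "u \<in> carrier (HomG C X (F Y))"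
  then show "cmp C u (cmp C c c') = cmp C (cmp C u c) c'"
    using comp_assoc[of X'' X' X "F Y"] F_Ob by (simp add: Hom_def)
next
  fix X X' Y Y' c a u
  assume "X \<in> Ob C" "X' \<in> Ob C" "Y \<in> Ob C" "Y' \<in> Ob C" "c \<in> Hom C X' X" "a \<in> Hom C Y Y'"
    and "u \<in> carrier (HomG C X (F Y))"
  then show "cmp C (cmp C (Fm Y Y' a) u) c = cmp C (Fm Y Y' a) (cmp C u c)"
    using comp_assoc[of X' X "F Y" "F Y'"] F_Ob Fm_Hom by (simp add: Hom_def)
next
  fix X Y Y' a1 a2 u
  assume "X \<in> Ob C" "Y \<in> Ob C" "Y' \<in> Ob C" "a1 \<in> Hom C Y Y'" "a2 \<in> Hom C Y Y'"
    and "u \<in> carrier (HomG C X (F Y))"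
  then show "cmp C (Fm Y Y' (madd C Y Y' a1 a2)) u
      = cmp C (Fm Y Y' a1) u \<otimes>\<^bsub>HomG C X (F Y')\<^esub> cmp C (Fm Y Y' a2) u"
    using Fm_madd comp_distrib_right[of X "F Y" "F Y'"] F_Ob Fm_Hom by (simp add: Hom_def madd_def)
next
  fix X X' Y c1 c2 u
  assume "X \<in> Ob C" "X' \<in> Ob C" "Y \<in> Ob C" "c1 \<in> Hom C X' X" "c2 \<in> Hom C X' X"
    and "u \<in> carrier (HomG C X (F Y))"
  then show "cmp C u (madd C X' X c1 c2) = cmp C u c1 \<otimes>\<^bsub>HomG C X' (F Y)\<^esub> cmp C u c2"
    using comp_distrib_left[of X' X "F Y"] F_Ob by (simp add: Hom_def madd_def)
qed

end

locale suspension = extriangulated_category +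
  fixes Z :: 'o and Sig :: "'o \<Rightarrow> 'o" and dl :: "'o \<Rightarrow> 'e"
  assumes zero_obj: "is_zero_obj T Z"
    and suspension: "\<forall>Y \<in> Ob T. Sig Y \<in> Ob T \<and> dl Y \<in> Ext T (Sig Y) Y \<and>
                realE T (Sig Y) Y (dl Y) Z (zm T Y Z) (zm T Z (Sig Y))"
begin

lemma Sig_Ob: "Y \<in> Ob T \<Longrightarrow> Sig Y \<in> Ob T"
  and dl_Ext: "Y \<in> Ob T \<Longrightarrow> dl Y \<in> Ext T (Sig Y) Y"
  and realE_dl: "Y \<in> Ob T \<Longrightarrow> realE T (Sig Y) Y (dl Y) Z (zm T Y Z) (zm T Z (Sig Y))"
  using suspension by auto

lemma ex1_pushE_dl_eq_pullE_dl:
  assumes "X \<in> Ob T" "Y \<in> Ob T" "f \<in> Hom T X Y"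
  shows "\<exists>!s. s \<in> Hom T (Sig X) (Sig Y) \<and> pushE T f (dl X) = pullE T s (dl Y)"
  using ex_pushE_eq_pullE[OF realE_dl realE_dl zero_obj] assms
    inj_on_pullE[OF realE_dl[OF assms(2)] zero_obj Sig_Ob[OF assms(1)]]
  by (metis inj_onD)

lemma SigMor_Hom: "\<lbrakk>X \<in> Ob T; Y \<in> Ob T; f \<in> Hom T X Y\<rbrakk> \<Longrightarrow> SigMor T Sig dl X Y f \<in> Hom T (Sig X) (Sig Y)"
  and pushE_dl_eq_pullE_SigMor: "\<lbrakk>X \<in> Ob T; Y \<in> Ob T; f \<in> Hom T X Y\<rbrakk>
    \<Longrightarrow> pushE T f (dl X) = pullE T (SigMor T Sig dl X Y f) (dl Y)"
  using theI'[OF ex1_pushE_dl_eq_pullE_dl] by (simp_all add: SigMor_def)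

lemma SigMor_unique:
  assumes "X \<in> Ob T" "Y \<in> Ob T" "f \<in> Hom T X Y"
    and "s \<in> Hom T (Sig X) (Sig Y)" "pushE T f (dl X) = pullE T s (dl Y)"
  shows "SigMor T Sig dl X Y f = s"
  using ex1_pushE_dl_eq_pullE_dl[OF assms(1-3)] SigMor_Hom[OF assms(1-3)]
    pushE_dl_eq_pullE_SigMor[OF assms(1-3)] assms(4,5)
  by blast

lemma SigMor_id:
  assumes X: "X \<in> Ob T"
  shows "SigMor T Sig dl X X (idm T X) = idm T (Sig X)"
proof (rule SigMor_unique[OF X X id_closed[OF X] id_closed[OF Sig_Ob[OF X]]])
  show "pushE T (idm T X) (dl X) = pullE T (idm T (Sig X)) (dl X)"
    using pushE_id pullE_id Sig_Ob[OF X] X dl_Ext[OF X] by simp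
qed

lemma SigMor_comp:
  assumes X: "X \<in> Ob T" and Y: "Y \<in> Ob T" and W: "W \<in> Ob T"
    and f: "f \<in> Hom T X Y" and g: "g \<in> Hom T Y W"
  shows "SigMor T Sig dl X W (cmp T g f) = cmp T (SigMor T Sig dl Y W g) (SigMor T Sig dl X Y f)"
proof (rule SigMor_unique[OF X W comp_closed[OF X Y W f g]])
  let ?sf = "SigMor T Sig dl X Y f" and ?sg = "SigMor T Sig dl Y W g"
  have sf: "?sf \<in> Hom T (Sig X) (Sig Y)" and sg: "?sg \<in> Hom T (Sig Y) (Sig W)"
    using SigMor_Hom X Y W f g by auto
  then show "cmp T ?sg ?sf \<in> Hom T (Sig X) (Sig W)"
    using comp_closed Sig_Ob X Y W by blast
  have "pushE T (cmp T g f) (dl X) = pushE T g (pushE T f (dl X))"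
    using pushE_comp[OF Sig_Ob[OF X] X Y W f g dl_Ext[OF X]] .
  also have "\<dots> = pushE T g (pullE T ?sf (dl Y))"
    using pushE_dl_eq_pullE_SigMor[OF X Y f] by simp
  also have "\<dots> = pullE T ?sf (pushE T g (dl Y))"
    using pullE_pushE[OF Sig_Ob[OF Y] Sig_Ob[OF X] Y W sf g dl_Ext[OF Y]] by simp
  also have "\<dots> = pullE T ?sf (pullE T ?sg (dl W))"
    using pushE_dl_eq_pullE_SigMor[OF Y W g] by simp
  also have "\<dots> = pullE T (cmp T ?sg ?sf) (dl W)"
    using pullE_comp[OF Sig_Ob[OF W] Sig_Ob[OF Y] Sig_Ob[OF X] W sg sf dl_Ext[OF W]] by simp
  finally show "pushE T (cmp T g f) (dl X) = pullE T (cmp T ?sg ?sf) (dl W)" .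
qed

lemma SigMor_madd:
  assumes X: "X \<in> Ob T" and Y: "Y \<in> Ob T" and f1: "f1 \<in> Hom T X Y" and f2: "f2 \<in> Hom T X Y"
  shows "SigMor T Sig dl X Y (madd T X Y f1 f2)
    = madd T (Sig X) (Sig Y) (SigMor T Sig dl X Y f1) (SigMor T Sig dl X Y f2)"
proof (rule SigMor_unique[OF X Y madd_closed[OF X Y f1 f2]])
  let ?s1 = "SigMor T Sig dl X Y f1" and ?s2 = "SigMor T Sig dl X Y f2"
  have s1: "?s1 \<in> Hom T (Sig X) (Sig Y)" and s2: "?s2 \<in> Hom T (Sig X) (Sig Y)"
    using SigMor_Hom X Y f1 f2 by auto
  then show "madd T (Sig X) (Sig Y) ?s1 ?s2 \<in> Hom T (Sig X) (Sig Y)"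
    using madd_closed Sig_Ob X Y by blast
  have "pushE T (madd T X Y f1 f2) (dl X) = pushE T f1 (dl X) \<otimes>\<^bsub>EG T (Sig X) Y\<^esub> pushE T f2 (dl X)"
    using pushE_madd[OF Sig_Ob[OF X] X Y f1 f2 dl_Ext[OF X]] .
  also have "\<dots> = pullE T (madd T (Sig X) (Sig Y) ?s1 ?s2) (dl Y)"
    using pullE_madd[OF Sig_Ob[OF Y] Sig_Ob[OF X] Y s1 s2 dl_Ext[OF Y]]
      pushE_dl_eq_pullE_SigMor[OF X Y f1] pushE_dl_eq_pullE_SigMor[OF X Y f2] by simp
  finally show "pushE T (madd T X Y f1 f2) (dl X) = pullE T (madd T (Sig X) (Sig Y) ?s1 ?s2) (dl Y)" .
qed

sublocale additive_endofunctor T Sig "SigMor T Sig dl"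
  by unfold_locales (simp_all add: Sig_Ob SigMor_Hom SigMor_id SigMor_comp SigMor_madd)

end

theorem lemma3p9:
  fixes T :: "('o, 'm, 'e, 'z) extri_scheme"
    and Z :: 'o and Sig :: "'o \<Rightarrow> 'o" and dl :: "'o \<Rightarrow> 'e"
  assumes ext: "extriangulated T"
    and zero: "is_zero_obj T Z"
    and infl: "\<forall>A \<in> Ob T. is_inflation T A Z (zm T A Z)"
    and defl: "\<forall>A \<in> Ob T. is_deflation T Z A (zm T Z A)"
    and sig: "\<forall>Y \<in> Ob T. Sig Y \<in> Ob T \<and> dl Y \<in> Ext T (Sig Y) Y \<and>
                realE T (Sig Y) Y (dl Y) Z (zm T Y Z) (zm T Z (Sig Y))"
  shows "biadditive T (\<lambda>X Y. HomG T X (Sig Y))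
           (\<lambda>X' X c h. cmp T h c)
           (\<lambda>Y Y' a h. cmp T (SigMor T Sig dl Y Y' a) h)"
proof -
  interpret suspension T Z Sig dl
    using ext zero sig by unfold_locales
  show ?thesis by (rule biadditive_Hom_F)
qed

end
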